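(* Let $f,g\in\mathbb N\{x_1,\dots,x_n\}$ have disjoint supports, and suppose $f-g$ is a polynomial identity of the ring $M_n(\mathbb Z)$ (i.e. $f(A_1,\dots,A_n)-g(A_1,\dots,A_n)=0$ for all $A_i\in M_n(\mathbb Z)$). Then $(f,g)$ is a semiring$^\dagger$ polynomial identity of $M_n(R)$ for every commutative semiring$^\dagger$ $R$.
   Context: A semiring$^\dagger$ $(R,+,\cdot,1)$ is a set with binary operations such that $(R,+)$ is an abelian semigroup, $(R,\cdot,1)$ is a monoid, and multiplication distributes over addition (no zero element required); it is commutative if multiplication is commutative. $\mathbb N\{x_1,\dots,x_m\}$ denotes the free $\mathbb N$-semiring$^\dagger$: the monoid semiring over $\mathbb N$ of the free (word) monoid on noncommuting indeterminates $x_1,\dots,x_m$; the support of $f$ is the set of words with nonzero coefficient. A pair $(f,g)$ of elements of $\mathbb N\{x_1,\dots,x_m\}$ is a (semiring$^\dagger$) polynomial identity of a semiring$^\dagger$ $S$ if $f(r_1,\dots,r_m)=g(r_1,\dots,r_m)$ for all $r_1,\dots,r_m\in S$. $M_n(R)$ is the semiring$^\dagger$ of $n\times n$ matrices with the usual matrix operations. *)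

theory Defs
  imports Main "HOL-Library.List_Lexorder"
begin

text \<open>Elements of the free N-semiring N{x_0,...,x_(m-1)} on noncommuting indeterminates:
  finitely supported coefficient functions on words (lists of variable indices).\<close>
type_synonym npoly = "nat list \<Rightarrow> nat"

definition supp :: "npoly \<Rightarrow> nat list set" where
  "supp f = {w. f w \<noteq> 0}"

definition is_npoly :: "nat \<Rightarrow> npoly \<Rightarrow> bool" where
  "is_npoly m f \<longleftrightarrow> finite (supp f) \<and> (\<forall>w\<in>supp f. set w \<subseteq> {..<m})"

text \<open>Sums of nonempty lists (no additive zero needed).\<close>
fun nsum :: "'a::plus list \<Rightarrow> 'a" where
  "nsum [x] = x"
| "nsum (x # y # xs) = x + nsum (y # xs)"
| "nsum [] = undefined"

text \<open>Sum in R with a formal zero adjoined: None represents the (possibly absent) zero.\<close>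
definition osum :: "'a::plus list \<Rightarrow> 'a option" where
  "osum xs = (if xs = [] then None else Some (nsum xs))"

text \<open>n x n matrices: only entries with indices < n are relevant.\<close>
type_synonym 'a mat = "nat \<Rightarrow> nat \<Rightarrow> 'a"

definition mmul :: "nat \<Rightarrow> 'a::{plus,times} mat \<Rightarrow> 'a mat \<Rightarrow> 'a mat" where
  "mmul n A B = (\<lambda>i j. nsum (map (\<lambda>k. A i k * B k j) [0..<n]))"

fun wprod :: "nat \<Rightarrow> (nat \<Rightarrow> 'a::{plus,times} mat) \<Rightarrow> nat list \<Rightarrow> 'a mat" where
  "wprod n A [] = undefined"
| "wprod n A (v # vs) = foldl (\<lambda>M u. mmul n M (A u)) (A v) vs"

text \<open>Summands of entry (i,j) of f(A): each word w contributes f w copies of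
  (A_w)_(ij); the empty word contributes the identity matrix (1 on the diagonal,
  nothing off the diagonal).\<close>
definition entry_terms ::
  "nat \<Rightarrow> npoly \<Rightarrow> (nat \<Rightarrow> 'a::{plus,times,one} mat) \<Rightarrow> nat \<Rightarrow> nat \<Rightarrow> 'a list" where
  "entry_terms n f A i j =
     concat (map (\<lambda>w. replicate (f w) (if w = [] then 1 else wprod n A w i j))
       (filter (\<lambda>w. w \<noteq> [] \<or> i = j) (sorted_list_of_set (supp f))))"

text \<open>Entry (i,j) of f(A) in M_n(R), computed in R with a zero adjoined (None = 0).\<close>
definition peval ::
  "nat \<Rightarrow> npoly \<Rightarrow> (nat \<Rightarrow> 'a::{plus,times,one} mat) \<Rightarrow> nat \<Rightarrow> nat \<Rightarrow> 'a option" where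
  "peval n f A i j = osum (entry_terms n f A i j)"

definition peval_int :: "nat \<Rightarrow> npoly \<Rightarrow> (nat \<Rightarrow> int mat) \<Rightarrow> nat \<Rightarrow> nat \<Rightarrow> int" where
  "peval_int n f A i j = (case peval n f A i j of None \<Rightarrow> 0 | Some x \<Rightarrow> x)"

end

theory Submission
  imports Defs "HOL-Library.Multiset" "HOL-Library.Countable"
begin

text \<open>
Expanding all word products entrywise, entry (i,j) of f(A) is the value, at the entries of the
matrices A_v, of a polynomial over \<nat> in commuting variables x_(v,k,l): entry (i,j) of f at
generic matrices. It involves neither subtraction nor zero, so its value makes sense in any
commutative semiring once a zero is adjoined. Applied to matrices with entries in \<nat>, the
hypothesis says that the generic entries of f and g agree at every point with natural
coordinates. A Kronecker substitution x_e = B^(D^e) with B, D large recovers all coefficients of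
a polynomial over \<nat> from a single value, so the two generic entries are the same polynomial.
\<close>

subsection \<open>Adjoining a zero to a commutative semiring\<close>

datatype 'a adjoin_zero = Adjoined_zero | Adj 'a

instantiation adjoin_zero :: ("{comm_semiring,comm_monoid_mult}") comm_semiring_1
begin

definition "zero_adjoin_zero = Adjoined_zero"

definition "one_adjoin_zero = Adj 1"

fun plus_adjoin_zero :: "'a adjoin_zero \<Rightarrow> 'a adjoin_zero \<Rightarrow> 'a adjoin_zero" where
  "plus_adjoin_zero Adjoined_zero b = b"
| "plus_adjoin_zero (Adj a) Adjoined_zero = Adj a"
| "plus_adjoin_zero (Adj a) (Adj b) = Adj (a + b)"

fun times_adjoin_zero :: "'a adjoin_zero \<Rightarrow> 'a adjoin_zero \<Rightarrow> 'a adjoin_zero" where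
  "times_adjoin_zero (Adj a) (Adj b) = Adj (a * b)"
| "times_adjoin_zero _ _ = Adjoined_zero"

instance
proof
  fix a b c :: "'a adjoin_zero"
  show "a + b + c = a + (b + c)" by (cases a; cases b; cases c) (auto simp: add.assoc)
  show "a + b = b + a" by (cases a; cases b) (auto simp: add.commute)
  show "0 + a = a" by (simp add: zero_adjoin_zero_def)
  show "a * b * c = a * (b * c)" by (cases a; cases b; cases c) (auto simp: mult.assoc)
  show "a * b = b * a" by (cases a; cases b) (auto simp: mult.commute)
  show "1 * a = a" by (cases a) (auto simp: one_adjoin_zero_def)
  show "(a + b) * c = a * c + b * c" by (cases a; cases b; cases c) (auto simp: distrib_right)
  show "0 * a = 0" by (simp add: zero_adjoin_zero_def)
  show "a * 0 = 0" by (cases a) (auto simp: zero_adjoin_zero_def)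
  show "(0::'a adjoin_zero) \<noteq> 1" by (simp add: zero_adjoin_zero_def one_adjoin_zero_def)
qed

end

lemma inj_case_option_zero_Adj: "inj (case_option 0 Adj)"
  by (rule injI) (auto simp: zero_adjoin_zero_def split: option.splits)

lemma nsum_hom:
  fixes h :: "'a::plus \<Rightarrow> 'b::monoid_add"
  assumes "\<And>a b. h (a + b) = h a + h b" and "xs \<noteq> []"
  shows "h (nsum xs) = sum_list (map h xs)"
  using assms(2) by (induction xs rule: nsum.induct) (auto simp: assms(1))

lemma sum_list_map_concat:
  "sum_list (map h (concat xss)) = sum_list (map (\<lambda>xs. sum_list (map h xs)) xss)"
  by (induction xss) auto

lemma osum_hom:
  fixes h :: "'a::plus \<Rightarrow> 'b::monoid_add"
  assumes "\<And>a b. h (a + b) = h a + h b"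
  shows "case_option 0 h (osum xs) = sum_list (map h xs)"
  using nsum_hom[of h xs, OF assms] by (simp add: osum_def)

subsection \<open>Polynomials over \<nat> in commuting variables\<close>

text \<open>A polynomial with coefficients in \<nat> in commuting variables of type 'e is encoded as the
  multiset of its monomials, each monomial being a multiset of variables.\<close>

definition eval_monomials :: "('e \<Rightarrow> 'b::comm_semiring_1) \<Rightarrow> 'e multiset multiset \<Rightarrow> 'b" where
  "eval_monomials x T = (\<Sum>E\<in>#T. \<Prod>e\<in>#E. x e)"

lemma eval_monomials_empty [simp]: "eval_monomials x {#} = 0"
  by (simp add: eval_monomials_def)

lemma eval_monomials_union [simp]:
  "eval_monomials x (T1 + T2) = eval_monomials x T1 + eval_monomials x T2"
  by (simp add: eval_monomials_def)

lemma eval_monomials_sum: "eval_monomials x (\<Sum>w\<in>S. T w) = (\<Sum>w\<in>S. eval_monomials x (T w))"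
  by (induction S rule: infinite_finite_induct) auto

lemma eval_monomials_repeat_mset:
  "eval_monomials x (repeat_mset m T) = of_nat m * eval_monomials x T"
  by (induction m) (auto simp: algebra_simps)

lemma eval_monomials_add_variable:
  "eval_monomials x (image_mset (add_mset e) T) = eval_monomials x T * x e"
  by (simp add: eval_monomials_def multiset.map_comp o_def sum_mset_distrib_left mult.commute)

lemma eval_monomials_of_nat:
  "eval_monomials (\<lambda>e. of_nat (y e)) T = (of_nat (eval_monomials y T) :: 'b::comm_semiring_1)"
proof -
  have "of_nat (\<Prod>e\<in>#E. y e) = (\<Prod>e\<in>#E. (of_nat (y e) :: 'b))" for E
    by (induction E) auto
  then show ?thesis
    by (simp add: eval_monomials_def of_nat_sum_mset multiset.map_comp o_def)
qed

subsection \<open>Kronecker substitution\<close>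

lemma image_mset_eq_imp_eq:
  assumes "image_mset f A = image_mset f B" and "inj_on f (set_mset A \<union> set_mset B)"
  shows "A = B"
  using image_mset_eq_image_mset_plusD[of f A B "{#}"] assms by auto

lemma base_expansion_unique:
  fixes d1 d2 :: "nat \<Rightarrow> nat"
  assumes "\<forall>k<K. d1 k < B" and "\<forall>k<K. d2 k < B"
    and "(\<Sum>k<K. d1 k * B^k) = (\<Sum>k<K. d2 k * B^k)"
  shows "\<forall>k<K. d1 k = d2 k"
  using assms
proof (induction K arbitrary: d1 d2)
  case 0
  then show ?case by simp
next
  case (Suc K)
  have split_low: "(\<Sum>k<Suc K. d k * B^k) = d 0 + B * (\<Sum>k<K. d (Suc k) * B^k)"
    for d :: "nat \<Rightarrow> nat"
    by (subst sum.lessThan_Suc_shift) (simp add: sum_distrib_left algebra_simps)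
  have eq: "d1 0 + B * (\<Sum>k<K. d1 (Suc k) * B^k) = d2 0 + B * (\<Sum>k<K. d2 (Suc k) * B^k)"
    using Suc.prems(3) split_low by metis
  have "B > 0" and "d1 0 < B" and "d2 0 < B"
    using Suc.prems by auto
  then have low: "d1 0 = d2 0"
    using arg_cong[OF eq, of "\<lambda>s. s mod B"] by simp
  with eq \<open>B > 0\<close> have high: "(\<Sum>k<K. d1 (Suc k) * B^k) = (\<Sum>k<K. d2 (Suc k) * B^k)"
    by simp
  have "\<forall>k<K. d1 (Suc k) < B" and "\<forall>k<K. d2 (Suc k) < B"
    using Suc.prems(1,2) by auto
  then have "\<forall>k<K. d1 (Suc k) = d2 (Suc k)"
    using high by (rule Suc.IH)
  with low show ?case
    by (auto simp: less_Suc_eq_0_disj)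
qed

lemma sum_mset_conv_count:
  fixes g :: "nat \<Rightarrow> 'b::comm_semiring_1"
  assumes "set_mset M \<subseteq> {..<N}"
  shows "(\<Sum>c\<in>#M. g c) = (\<Sum>c<N. of_nat (count M c) * g c)"
  using assms
proof (induction M)
  case empty
  then show ?case by simp
next
  case (add a M)
  have "(\<Sum>c<N. of_nat (count (add_mset a M) c) * g c)
      = (\<Sum>c<N. of_nat (count M c) * g c + (if c = a then g c else 0))"
    by (intro sum.cong) (auto simp: algebra_simps)
  also have "\<dots> = (\<Sum>c<N. of_nat (count M c) * g c) + g a"
    using add.prems by (simp add: sum.distrib)
  finally show ?case
    using add by (simp add: add.commute)
qed

text \<open>A multiset of exponents of size less than B is determined by the sum of the
  corresponding powers of B: the multiplicities are its base-B digits.\<close>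

lemma sum_mset_power_inj:
  fixes M1 M2 :: "nat multiset"
  assumes "size M1 < B" and "size M2 < B"
    and "(\<Sum>c\<in>#M1. B ^ c) = (\<Sum>c\<in>#M2. B ^ c)"
  shows "M1 = M2"
proof -
  define N where "N = Suc (Max (set_mset (M1 + M2)))"
  have below: "set_mset M1 \<subseteq> {..<N}" "set_mset M2 \<subseteq> {..<N}"
    by (auto simp: N_def less_Suc_eq_le)
  have "\<forall>c<N. count M1 c = count M2 c"
  proof (rule base_expansion_unique)
    show "\<forall>c<N. count M1 c < B" "\<forall>c<N. count M2 c < B"
      using le_less_trans[OF count_le_size assms(1)] le_less_trans[OF count_le_size assms(2)]
      by blast+
    show "(\<Sum>c<N. count M1 c * B ^ c) = (\<Sum>c<N. count M2 c * B ^ c)"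
      using assms(3) by (simp add: sum_mset_conv_count[OF below(1)] sum_mset_conv_count[OF below(2)])
  qed
  moreover have "count M1 c = 0" "count M2 c = 0" if "N \<le> c" for c
    using below that by (auto simp: count_eq_zero_iff)
  ultimately show ?thesis
    by (metis multiset_eqI not_less)
qed

text \<open>The value at x_e = B^(D^(to_nat e)) encodes the monomials of T
  in base D and their multiplicities in base B.\<close>

lemma eval_monomials_nat_inj:
  fixes T1 T2 :: "'e::countable multiset multiset"
  assumes "\<And>y :: 'e \<Rightarrow> nat. eval_monomials y T1 = eval_monomials y T2"
  shows "T1 = T2"
proof -
  define S where "S = set_mset (T1 + T2)"
  define D where "D = Suc (Max (size ` S))"
  define key where "key E = (\<Sum>e\<in>#E. D ^ to_nat e)" for E :: "'e multiset"
  have "inj_on key S"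
  proof (rule inj_onI)
    fix E1 E2
    assume "E1 \<in> S" "E2 \<in> S" "key E1 = key E2"
    moreover have "size E < D" if "E \<in> S" for E
      using that by (auto simp: D_def S_def less_Suc_eq_le)
    ultimately have "image_mset to_nat E1 = image_mset to_nat E2"
      by (intro sum_mset_power_inj[of _ D]) (auto simp: key_def multiset.map_comp o_def)
    then show "E1 = E2"
      by (rule image_mset_eq_imp_eq) (auto intro: inj_on_subset[OF inj_to_nat])
  qed
  define B where "B = Suc (size T1 + size T2)"
  have substituted: "eval_monomials (\<lambda>e. B ^ (D ^ to_nat e)) T = (\<Sum>c\<in>#image_mset key T. B ^ c)" for T
  proof -
    have "(\<Prod>e\<in>#E. B ^ (D ^ to_nat e)) = B ^ key E" for E
      by (induction E) (auto simp: key_def power_add)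
    then show ?thesis
      by (simp add: eval_monomials_def multiset.map_comp o_def)
  qed
  have "image_mset key T1 = image_mset key T2"
  proof (rule sum_mset_power_inj[of _ B])
    show "(\<Sum>c\<in>#image_mset key T1. B ^ c) = (\<Sum>c\<in>#image_mset key T2. B ^ c)"
      using assms[of "\<lambda>e. B ^ (D ^ to_nat e)"] by (simp only: substituted)
  qed (simp_all add: B_def)
  then show ?thesis
    by (rule image_mset_eq_imp_eq[OF _ inj_on_subset[OF \<open>inj_on key S\<close>]]) (simp add: S_def)
qed

subsection \<open>Entries of f evaluated at generic matrices\<close>

text \<open>The generic matrix X_v has the variable (v,k,l) as entry (k,l).\<close>

definition generic_mult_right ::
  "nat \<Rightarrow> (nat \<Rightarrow> nat \<Rightarrow> (nat \<times> nat \<times> nat) multiset multiset) \<Rightarrow> nat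
     \<Rightarrow> nat \<Rightarrow> nat \<Rightarrow> (nat \<times> nat \<times> nat) multiset multiset" where
  "generic_mult_right n M u = (\<lambda>i j. \<Sum>k<n. image_mset (add_mset (u,k,j)) (M i k))"

fun generic_wprod :: "nat \<Rightarrow> nat list \<Rightarrow> nat \<Rightarrow> nat \<Rightarrow> (nat \<times> nat \<times> nat) multiset multiset" where
  "generic_wprod n [] i j = (if i = j then {#{#}#} else {#})"
| "generic_wprod n (v # vs) i j = foldl (generic_mult_right n) (\<lambda>i j. {#{#(v,i,j)#}#}) vs i j"

definition generic_entry :: "nat \<Rightarrow> npoly \<Rightarrow> nat \<Rightarrow> nat \<Rightarrow> (nat \<times> nat \<times> nat) multiset multiset" where
  "generic_entry n f i j = (\<Sum>w\<in>supp f. repeat_mset (f w) (generic_wprod n w i j))"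

text \<open>The map h lets the entries of A live in a semiring without 0 or 1; it will be the embedding
  into the semiring with a zero adjoined, or the identity on \<int>.\<close>

lemma foldl_mmul_hom:
  fixes h :: "'a::{plus,times} \<Rightarrow> 'b::comm_semiring_1"
  assumes h_add: "\<And>a b. h (a + b) = h a + h b" and h_mult: "\<And>a b. h (a * b) = h a * h b"
    and "n > 0"
    and M: "\<And>i j. i < n \<Longrightarrow> j < n \<Longrightarrow> h (M i j) = eval_monomials (\<lambda>(v,k,l). h (A v k l)) (MT i j)"
    and "i < n" and "j < n"
  shows "h (foldl (\<lambda>M u. mmul n M (A u)) M vs i j)
    = eval_monomials (\<lambda>(v,k,l). h (A v k l)) (foldl (generic_mult_right n) MT vs i j)"
  using M \<open>i < n\<close> \<open>j < n\<close>
proof (induction vs arbitrary: M MT i j)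
  case Nil
  then show ?case by simp
next
  case (Cons u vs)
  let ?x = "\<lambda>(v,k,l). h (A v k l)"
  have "h (mmul n M (A u) i j) = eval_monomials ?x (generic_mult_right n MT u i j)"
    if "i < n" "j < n" for i j
  proof -
    have "h (mmul n M (A u) i j) = sum_list (map h (map (\<lambda>k. M i k * A u k j) [0..<n]))"
      unfolding mmul_def by (rule nsum_hom[OF h_add]) (simp add: \<open>n > 0\<close>)
    also have "\<dots> = (\<Sum>k<n. h (M i k) * h (A u k j))"
      by (simp add: o_def h_mult sum_set_upt_conv_sum_list_nat[symmetric] atLeast0LessThan)
    also have "\<dots> = (\<Sum>k<n. eval_monomials ?x (MT i k) * ?x (u,k,j))"
      using Cons.prems(1) that by (intro sum.cong) auto
    also have "\<dots> = eval_monomials ?x (generic_mult_right n MT u i j)"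
      by (simp add: generic_mult_right_def eval_monomials_sum eval_monomials_add_variable)
    finally show ?thesis .
  qed
  then show ?case
    using Cons.IH Cons.prems(2,3) by simp
qed

lemma sum_entry_terms_hom:
  fixes h :: "'a::{plus,times,one} \<Rightarrow> 'b::comm_semiring_1"
  assumes h_add: "\<And>a b. h (a + b) = h a + h b" and h_mult: "\<And>a b. h (a * b) = h a * h b"
    and h_one: "h 1 = 1"
    and "finite (supp f)" and "i < n" and "j < n"
  shows "sum_list (map h (entry_terms n f A i j))
    = eval_monomials (\<lambda>(v,k,l). h (A v k l)) (generic_entry n f i j)"
proof -
  let ?x = "\<lambda>(v,k,l). h (A v k l)"
  define t where "t = (\<lambda>w. if w = [] then 1 else wprod n A w i j)"
  define P where "P = (\<lambda>w :: nat list. w \<noteq> [] \<or> i = j)"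
  have word: "(if P w then of_nat (f w) * h (t w) else 0)
      = of_nat (f w) * eval_monomials ?x (generic_wprod n w i j)" for w
  proof (cases w)
    case Nil
    then show ?thesis by (simp add: P_def t_def h_one eval_monomials_def)
  next
    case (Cons v vs)
    have "h (foldl (\<lambda>M u. mmul n M (A u)) (A v) vs i j)
        = eval_monomials ?x (foldl (generic_mult_right n) (\<lambda>i j. {#{#(v,i,j)#}#}) vs i j)"
      by (rule foldl_mmul_hom[OF h_add h_mult]) (use assms in \<open>auto simp: eval_monomials_def\<close>)
    with Cons show ?thesis
      by (simp add: P_def t_def)
  qed
  have "sum_list (map h (entry_terms n f A i j))
      = sum_list (map (\<lambda>w. of_nat (f w) * h (t w)) (filter P (sorted_list_of_set (supp f))))"
    by (simp add: entry_terms_def sum_list_map_concat o_def sum_list_replicate t_def P_def)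
  also have "\<dots> = (\<Sum>w\<in>supp f. if P w then of_nat (f w) * h (t w) else 0)"
    using \<open>finite (supp f)\<close>
    by (simp add: sum_list_distinct_conv_sum_set sum.inter_filter[symmetric] Collect_conj_eq Int_commute)
  also have "\<dots> = eval_monomials ?x (generic_entry n f i j)"
    by (simp add: word generic_entry_def eval_monomials_sum eval_monomials_repeat_mset)
  finally show ?thesis .
qed

lemma peval_int_of_nat:
  assumes "finite (supp f)" and "i < n" and "j < n"
  shows "peval_int n f (\<lambda>v k l. int (y (v,k,l))) i j = int (eval_monomials y (generic_entry n f i j))"
proof -
  have "peval_int n f (\<lambda>v k l. int (y (v,k,l))) i j
      = case_option 0 id (osum (entry_terms n f (\<lambda>v k l. int (y (v,k,l))) i j))"
    unfolding peval_int_def peval_def by (simp split: option.split)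
  also have "\<dots> = sum_list (map id (entry_terms n f (\<lambda>v k l. int (y (v,k,l))) i j))"
    by (rule osum_hom) simp
  also have "\<dots> = eval_monomials (\<lambda>e. int (y e)) (generic_entry n f i j)"
    by (subst sum_entry_terms_hom) (use assms in \<open>simp_all add: case_prod_beta'\<close>)
  finally show ?thesis
    by (simp add: eval_monomials_of_nat)
qed

lemma peval_adjoin_zero:
  fixes A :: "nat \<Rightarrow> 'a::{comm_semiring,comm_monoid_mult} mat"
  assumes "finite (supp f)" and "i < n" and "j < n"
  shows "case_option 0 Adj (peval n f A i j)
    = eval_monomials (\<lambda>(v,k,l). Adj (A v k l)) (generic_entry n f i j)"
proof -
  have "case_option 0 Adj (peval n f A i j) = sum_list (map Adj (entry_terms n f A i j))"
    unfolding peval_def by (rule osum_hom) simp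
  also have "\<dots> = eval_monomials (\<lambda>(v,k,l). Adj (A v k l)) (generic_entry n f i j)"
    by (rule sum_entry_terms_hom) (use assms in \<open>simp_all add: one_adjoin_zero_def\<close>)
  finally show ?thesis .
qed

theorem theorem5p4:
  fixes n :: nat and f g :: npoly
  assumes "is_npoly n f" and "is_npoly n g"
    and "supp f \<inter> supp g = {}"
    and "\<forall>(A :: nat \<Rightarrow> int mat) i j. i < n \<longrightarrow> j < n \<longrightarrow>
           peval_int n f A i j - peval_int n g A i j = 0"
  shows "\<forall>(A :: nat \<Rightarrow> 'a::{comm_semiring, comm_monoid_mult} mat) i j.
           i < n \<longrightarrow> j < n \<longrightarrow> peval n f A i j = peval n g A i j"
proof (intro allI impI)
  fix A :: "nat \<Rightarrow> 'a mat" and i j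
  assume ij: "i < n" "j < n"
  have fin: "finite (supp f)" "finite (supp g)"
    using assms(1,2) by (simp_all add: is_npoly_def)
  have "eval_monomials y (generic_entry n f i j) = eval_monomials y (generic_entry n g i j)"
    for y :: "nat \<times> nat \<times> nat \<Rightarrow> nat"
    using assms(4) peval_int_of_nat[OF fin(1) ij, of y] peval_int_of_nat[OF fin(2) ij, of y] ij
    by force
  then have "generic_entry n f i j = generic_entry n g i j"
    by (rule eval_monomials_nat_inj)
  then have "case_option 0 Adj (peval n f A i j) = case_option 0 Adj (peval n g A i j)"
    by (simp add: peval_adjoin_zero fin ij)
  then show "peval n f A i j = peval n g A i j"
    by (rule injD[OF inj_case_option_zero_Adj])
qed

end
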